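(* Let $C \subset \mathbb{R}^n$ be convex, compact, with nonempty interior, and let $h \colon C \to \mathbb{R}$ be a Legendre function with domain $C$ that is continuous on $C$. Then: (i) Condition (A) holds if and only if $h$ is strictly convex on $C$; (ii) Condition (B) holds if and only if $C$ is a polytope. Here condition (A) is: for every sequence $(x_k)_{k\in\mathbb{N}} \subset \mathrm{int}\, C$ and every $y \in C$, if $D_h(y,x_k) \to 0$ as $k\to\infty$ then $x_k \to y$. Condition (B) is: for every sequence $(x_k)_{k\in\mathbb{N}} \subset \mathrm{int}\, C$ and every $y \in C$, if $x_k \to y$ as $k \to \infty$ then $D_h(y,x_k) \to 0$.
   Context: A convex function $h \colon C \to \mathbb{R}$ on a convex set $C\subset\mathbb{R}^n$ with nonempty interior is called Legendre if (1) it is essentially smooth: $h$ is continuously differentiable on $\mathrm{int}\, C$ and $\|\nabla h(x)\| \to +\infty$ whenever $x \in \mathrm{int}\, C$ approaches a point of the boundary of $C$; and (2) $h$ is strictly convex on $\mathrm{int}\, C$. The Bregman divergence of $h$ is defined for $y \in C$ and $x \in \mathrm{int}\, C$ by $D_h(y,x) = h(y) - h(x) - \langle \nabla h(x), y - x\rangle$. A polytope is the convex hull of finitely many points. *)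

theory Defs
  imports "HOL-Analysis.Analysis"
begin

definition strictly_convex_on :: "'a::real_vector set \<Rightarrow> ('a \<Rightarrow> real) \<Rightarrow> bool" where
  "strictly_convex_on S f \<longleftrightarrow> convex S \<and>
     (\<forall>x\<in>S. \<forall>y\<in>S. x \<noteq> y \<longrightarrow> (\<forall>t::real. 0 < t \<and> t < 1 \<longrightarrow>
        f ((1 - t) *\<^sub>R x + t *\<^sub>R y) < (1 - t) * f x + t * f y))"

text \<open>Gradient of h at x (meaningful where h is differentiable at x).\<close>
definition grad :: "('a::euclidean_space \<Rightarrow> real) \<Rightarrow> 'a \<Rightarrow> 'a" where
  "grad h x = (THE g. (h has_derivative (\<lambda>v. g \<bullet> v)) (at x))"

definition essentially_smooth :: "('a::euclidean_space \<Rightarrow> real) \<Rightarrow> 'a set \<Rightarrow> bool" where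
  "essentially_smooth h C \<longleftrightarrow>
     (\<forall>x\<in>interior C. h differentiable (at x)) \<and>
     continuous_on (interior C) (grad h) \<and>
     (\<forall>b\<in>frontier C. filterlim (\<lambda>x. norm (grad h x)) at_top (at b within interior C))"

definition legendre :: "('a::euclidean_space \<Rightarrow> real) \<Rightarrow> 'a set \<Rightarrow> bool" where
  "legendre h C \<longleftrightarrow> convex_on C h \<and> interior C \<noteq> {} \<and>
     essentially_smooth h C \<and> strictly_convex_on (interior C) h"

definition bregman :: "('a::euclidean_space \<Rightarrow> real) \<Rightarrow> 'a \<Rightarrow> 'a \<Rightarrow> real" where
  "bregman h y x = h y - h x - grad h x \<bullet> (y - x)"

definition condA :: "('a::euclidean_space \<Rightarrow> real) \<Rightarrow> 'a set \<Rightarrow> bool" where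
  "condA h C \<longleftrightarrow> (\<forall>xs y. (\<forall>k. xs k \<in> interior C) \<longrightarrow> y \<in> C \<longrightarrow>
      (\<lambda>k. bregman h y (xs k)) \<longlonglongrightarrow> 0 \<longrightarrow> xs \<longlonglongrightarrow> y)"

definition condB :: "('a::euclidean_space \<Rightarrow> real) \<Rightarrow> 'a set \<Rightarrow> bool" where
  "condB h C \<longleftrightarrow> (\<forall>xs y. (\<forall>k. xs k \<in> interior C) \<longrightarrow> y \<in> C \<longrightarrow>
      xs \<longlonglongrightarrow> y \<longrightarrow> (\<lambda>k. bregman h y (xs k)) \<longlonglongrightarrow> 0)"

end

theory Submission
  imports Defs
begin

text \<open>
  (i) For x in the interior, the gradient inequality at x towards the midpoint of x and y gives
  h x + h y - 2 h((x + y)/2) \<le> D_h(y, x); under strict convexity the left side is bounded below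
  by a positive constant away from y (compactness), which yields (A). Conversely, the gradient
  inequality towards 2x - y bounds D_h(y, x) by h y - 2 h x + h(2x - y), which tends to 0 when x
  approaches y radially from an interior point. If h were affine on a segment [u, v] through w,
  then D_h(u, x) \<le> D_h(w, x) / (1 - t) would also tend to 0 along a sequence converging to w \<noteq> u,
  violating (A).

  (ii) Both sides are equivalent to C being locally conic at each of its points. Polyhedra are
  locally conic, and extreme points of a locally conic compact set cannot accumulate, so by
  Krein-Milman such a convex set is a polytope. Local conicity gives (B) by the reflection bound
  above. Conversely, (B) gives D_h(y, x) < 1 for interior x near y. If 2z - y \<notin> C for an
  interior z near y, the segment from z to 2z - y meets the frontier at some q near y, where
  |\<nabla>h| blows up; but for interior x near q the gradient inequality and D_h(y, x) \<le> 1 bound |\<nabla>h(x)|.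
\<close>

lemma has_derivative_grad:
  fixes h :: "'a::euclidean_space \<Rightarrow> real"
  assumes "h differentiable (at x)"
  shows "(h has_derivative (\<lambda>v. grad h x \<bullet> v)) (at x)"
proof -
  obtain D where D: "(h has_derivative D) (at x)"
    using assms by (auto simp: differentiable_def)
  define a where "a = adjoint D 1"
  have "D = (\<lambda>v. a \<bullet> v)"
    using adjoint_works[OF has_derivative_linear[OF D], of _ 1] by (auto simp: a_def inner_commute)
  with D have a: "(h has_derivative (\<lambda>v. a \<bullet> v)) (at x)"
    by simp
  have unique: "g = a" if "(h has_derivative (\<lambda>v. g \<bullet> v)) (at x)" for g
    using has_derivative_unique[OF that a] vector_eq_rdot by metis
  have "grad h x = a"
    unfolding grad_def using a unique by (rule the_equality)
  with a show ?thesis by simp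
qed

lemma convex_on_gradient_inequality:
  fixes h :: "'a::real_inner \<Rightarrow> real"
  assumes convex: "convex_on C h" and "x \<in> C" "c \<in> C"
    and deriv: "(h has_derivative (\<lambda>v. g \<bullet> v)) (at x)"
  shows "h x + g \<bullet> (c - x) \<le> h c"
proof -
  define \<phi> where "\<phi> t = h (x + t *\<^sub>R (c - x))" for t :: real
  have "((\<lambda>t. x + t *\<^sub>R (c - x)) has_derivative (\<lambda>t. t *\<^sub>R (c - x))) (at 0)"
    by (auto intro!: derivative_eq_intros)
  moreover have "(h has_derivative (\<lambda>v. g \<bullet> v)) (at (x + 0 *\<^sub>R (c - x)))"
    using deriv by simp
  ultimately have "(\<phi> has_derivative (\<lambda>t. g \<bullet> (t *\<^sub>R (c - x)))) (at 0)"
    unfolding \<phi>_def by (rule has_derivative_compose[THEN has_derivative_eq_rhs]) (simp add: o_def)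
  then have "(\<phi> has_real_derivative g \<bullet> (c - x)) (at 0)"
    unfolding has_field_derivative_def by (rule has_derivative_eq_rhs) (auto simp: fun_eq_iff)
  then have "((\<lambda>t. (\<phi> t - \<phi> 0) / t) \<longlongrightarrow> g \<bullet> (c - x)) (at_right 0)"
    unfolding has_field_derivative_iff by (auto elim: filterlim_mono simp: at_le)
  moreover have "\<forall>\<^sub>F t in at_right 0. (\<phi> t - \<phi> 0) / t \<le> h c - h x"
    using eventually_at_right_real[OF zero_less_one]
  proof eventually_elim
    case (elim t)
    have "\<phi> t = h ((1 - t) *\<^sub>R x + t *\<^sub>R c)"
      by (simp add: \<phi>_def algebra_simps)
    also have "\<dots> \<le> (1 - t) * h x + t * h c"
      using elim convex_onD[OF convex] assms(2,3) by simp
    finally have "\<phi> t - \<phi> 0 \<le> t * (h c - h x)"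
      by (simp add: \<phi>_def algebra_simps)
    then show ?case
      using elim by (simp add: divide_le_eq mult.commute)
  qed
  ultimately have "g \<bullet> (c - x) \<le> h c - h x"
    by (rule tendsto_upperbound) simp
  then show ?thesis by simp
qed

text \<open>Near y, C is stable under the homothety of ratio 2 centred at y; for convex C this says
  that C coincides near y with a cone with apex y.\<close>
definition locally_conic_at :: "'a::real_normed_vector set \<Rightarrow> 'a \<Rightarrow> bool" where
  "locally_conic_at C y \<longleftrightarrow> (\<forall>\<^sub>F z in nhds y. z \<in> C \<longrightarrow> 2 *\<^sub>R z - y \<in> C)"

lemma polyhedron_locally_conic_at:
  assumes "polyhedron C" and "y \<in> C"
  shows "locally_conic_at C y"
proof -
  obtain F where F: "finite F" "C = \<Inter>F" and halfspace: "\<forall>H\<in>F. \<exists>a b. a \<noteq> 0 \<and> H = {x. a \<bullet> x \<le> b}"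
    using assms(1) unfolding polyhedron_def by blast
  have "\<forall>\<^sub>F z in nhds y. z \<in> H \<longrightarrow> 2 *\<^sub>R z - y \<in> H" if "H \<in> F" for H
  proof -
    obtain a b where H: "H = {x. a \<bullet> x \<le> b}"
      using halfspace \<open>H \<in> F\<close> by blast
    have "a \<bullet> y \<le> b"
      using assms(2) F(2) \<open>H \<in> F\<close> H by auto
    then consider "a \<bullet> y = b" | "a \<bullet> y < b"
      by linarith
    then show ?thesis
    proof cases
      case 1
      then show ?thesis
        by (intro always_eventually) (auto simp: H inner_diff_right)
    next
      case 2
      have "open {z. a \<bullet> (2 *\<^sub>R z - y) < b}"
        by (intro open_Collect_less continuous_intros)
      moreover have "y \<in> {z. a \<bullet> (2 *\<^sub>R z - y) < b}"
        using 2 by (simp add: scaleR_2)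
      ultimately show ?thesis
        unfolding eventually_nhds by (intro exI[of _ "{z. a \<bullet> (2 *\<^sub>R z - y) < b}"]) (auto simp: H)
    qed
  qed
  then have "\<forall>\<^sub>F z in nhds y. \<forall>H\<in>F. z \<in> H \<longrightarrow> 2 *\<^sub>R z - y \<in> H"
    by (intro eventually_ball_finite[OF F(1)] ballI)
  then show ?thesis
    unfolding locally_conic_at_def by eventually_elim (auto simp: F(2))
qed

lemma finite_extreme_points_if_locally_conic:
  fixes C :: "'a::euclidean_space set"
  assumes "compact C" and conic: "\<forall>y\<in>C. locally_conic_at C y"
  shows "finite {x. x extreme_point_of C}"
proof (rule ccontr)
  let ?E = "{x. x extreme_point_of C}"
  assume "infinite ?E"
  moreover have "?E \<subseteq> C"
    by (auto simp: extreme_point_of_def)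
  ultimately obtain y where "y \<in> C" and "y islimpt ?E"
    using \<open>compact C\<close> unfolding compact_eq_Bolzano_Weierstrass by blast
  obtain \<rho> where "\<rho> > 0" and \<rho>: "\<And>z. dist z y < \<rho> \<Longrightarrow> z \<in> C \<Longrightarrow> 2 *\<^sub>R z - y \<in> C"
    using conic \<open>y \<in> C\<close> unfolding locally_conic_at_def eventually_nhds_metric by blast
  obtain e where e: "e extreme_point_of C" "e \<noteq> y" "dist e y < \<rho>"
    using \<open>y islimpt ?E\<close> \<open>\<rho> > 0\<close> unfolding islimpt_approachable by blast
  have "2 *\<^sub>R e - y \<in> C"
    using \<rho> e extreme_point_of_def by blast
  moreover have mid: "e = midpoint y (2 *\<^sub>R e - y)"
    by (simp add: midpoint_def)
  moreover have "y \<noteq> 2 *\<^sub>R e - y"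
    using e(2) mid by (metis midpoint_idem)
  ultimately show False
    using e(1) \<open>y \<in> C\<close> midpoint_in_open_segment unfolding extreme_point_of_def by metis
qed

lemma polytope_iff_locally_conic:
  fixes C :: "'a::euclidean_space set"
  assumes "compact C" and "convex C"
  shows "polytope C \<longleftrightarrow> (\<forall>y\<in>C. locally_conic_at C y)"
proof
  show "polytope C \<Longrightarrow> \<forall>y\<in>C. locally_conic_at C y"
    using polytope_imp_polyhedron polyhedron_locally_conic_at by blast
  show "\<forall>y\<in>C. locally_conic_at C y \<Longrightarrow> polytope C"
    unfolding polytope_def
    using Krein_Milman_Minkowski[OF assms] finite_extreme_points_if_locally_conic[OF \<open>compact C\<close>]
    by blast
qed

lemma locally_conic_at_if_interior:
  fixes C :: "'a::euclidean_space set"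
  assumes "convex C" "closed C" "interior C \<noteq> {}"
    and "\<forall>\<^sub>F z in nhds y. z \<in> interior C \<longrightarrow> 2 *\<^sub>R z - y \<in> C"
  shows "locally_conic_at C y"
proof -
  obtain U where "open U" "y \<in> U" and U: "U \<inter> interior C \<subseteq> (\<lambda>z. 2 *\<^sub>R z - y) -` C"
    using assms(4) unfolding eventually_nhds by blast
  have "closed ((\<lambda>z. 2 *\<^sub>R z - y) -` C)"
    by (intro continuous_closed_vimage \<open>closed C\<close> continuous_intros)
  then have "closure (U \<inter> interior C) \<subseteq> (\<lambda>z. 2 *\<^sub>R z - y) -` C"
    using U closure_minimal by blast
  moreover have "U \<inter> C \<subseteq> closure (U \<inter> interior C)"
    using open_Int_closure_subset[OF \<open>open U\<close>, of "interior C"] closure_subset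
      convex_closure_interior[OF assms(1,3)] by blast
  ultimately show ?thesis
    unfolding locally_conic_at_def eventually_nhds using \<open>open U\<close> \<open>y \<in> U\<close> by blast
qed

lemma bregman_convex_combination:
  "(1 - t) * bregman h u x + t * bregman h v x =
     bregman h ((1 - t) *\<^sub>R u + t *\<^sub>R v) x + ((1 - t) * h u + t * h v - h ((1 - t) *\<^sub>R u + t *\<^sub>R v))"
proof -
  have "(1 - t) *\<^sub>R u + t *\<^sub>R v - x = (1 - t) *\<^sub>R (u - x) + t *\<^sub>R (v - x)"
    by (simp add: algebra_simps)
  then show ?thesis
    by (simp add: bregman_def inner_add_right algebra_simps)
qed

lemma bregman_tendsto_zero_at_if_condB:
  assumes "condB h C" and "y \<in> C"
  shows "((\<lambda>x. bregman h y x) \<longlongrightarrow> 0) (at y within interior C)"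
  using assms unfolding condB_def tendsto_at_iff_sequentially comp_def by blast

context
  fixes C :: "'a::euclidean_space set" and h :: "'a \<Rightarrow> real"
  assumes convex_h: "convex_on C h"
    and differentiable_h: "\<And>x. x \<in> interior C \<Longrightarrow> h differentiable (at x)"
begin

lemma gradient_inequality:
  assumes "x \<in> interior C" and "c \<in> C"
  shows "h x + grad h x \<bullet> (c - x) \<le> h c"
  using convex_on_gradient_inequality[OF convex_h _ assms(2) has_derivative_grad[OF differentiable_h]]
    assms(1) interior_subset by blast

lemma bregman_nonneg:
  assumes "x \<in> interior C" and "y \<in> C"
  shows "0 \<le> bregman h y x"
  using gradient_inequality[OF assms] by (simp add: bregman_def)

lemma bregman_le_reflection:
  assumes "x \<in> interior C" and "2 *\<^sub>R x - y \<in> C"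
  shows "bregman h y x \<le> h y - 2 * h x + h (2 *\<^sub>R x - y)"
proof -
  have "h x + grad h x \<bullet> (x - y) \<le> h (2 *\<^sub>R x - y)"
    using gradient_inequality[OF assms] by (simp add: scaleR_2 algebra_simps)
  then show ?thesis
    by (simp add: bregman_def inner_diff_right)
qed

lemma midpoint_gap_le_bregman:
  assumes "x \<in> interior C" and "y \<in> C"
  shows "h x + h y - 2 * h (midpoint x y) \<le> bregman h y x"
proof -
  have "midpoint x y \<in> C"
    using convex_on_imp_convex[OF convex_h] assms interior_subset midpoint_in_closed_segment
    unfolding convex_contains_segment by blast
  from gradient_inequality[OF assms(1) this]
  have "h x + grad h x \<bullet> (y - x) / 2 \<le> h (midpoint x y)"
    by (simp add: midpoint_def algebra_simps inner_diff_right diff_divide_distrib)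
  then show ?thesis
    by (simp add: bregman_def)
qed

lemma bregman_tendsto_zero_if_reflection:
  assumes "continuous_on C h" and "y \<in> C"
    and interior: "\<forall>k. xs k \<in> interior C" and "xs \<longlonglongrightarrow> y"
    and reflection: "\<forall>\<^sub>F k in sequentially. 2 *\<^sub>R xs k - y \<in> C"
  shows "(\<lambda>k. bregman h y (xs k)) \<longlonglongrightarrow> 0"
proof (rule real_tendsto_sandwich[where f = "\<lambda>_. 0" and h = "\<lambda>k. h y - 2 * h (xs k) + h (2 *\<^sub>R xs k - y)"])
  show "\<forall>\<^sub>F k in sequentially. 0 \<le> bregman h y (xs k)"
    using bregman_nonneg interior \<open>y \<in> C\<close> by simp
  show "\<forall>\<^sub>F k in sequentially. bregman h y (xs k) \<le> h y - 2 * h (xs k) + h (2 *\<^sub>R xs k - y)"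
    using reflection by eventually_elim (simp add: bregman_le_reflection interior)
  have "(\<lambda>k. 2 *\<^sub>R xs k - y) \<longlonglongrightarrow> 2 *\<^sub>R y - y"
    by (intro tendsto_intros \<open>xs \<longlonglongrightarrow> y\<close>)
  then have "(\<lambda>k. h (2 *\<^sub>R xs k - y)) \<longlonglongrightarrow> h y"
    using continuous_on_tendsto_compose[OF assms(1) _ \<open>y \<in> C\<close> reflection] by (simp add: scaleR_2)
  moreover have "\<forall>\<^sub>F k in sequentially. xs k \<in> C"
    using interior interior_subset by (auto intro: always_eventually)
  then have "(\<lambda>k. h (xs k)) \<longlonglongrightarrow> h y"
    by (rule continuous_on_tendsto_compose[OF assms(1) \<open>xs \<longlonglongrightarrow> y\<close> \<open>y \<in> C\<close>])
  ultimately show "(\<lambda>k. h y - 2 * h (xs k) + h (2 *\<^sub>R xs k - y)) \<longlonglongrightarrow> 0"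
    by (auto intro!: tendsto_eq_intros)
qed simp

lemma interior_sequence_bregman_tendsto_zero:
  assumes "continuous_on C h" and "interior C \<noteq> {}" and "y \<in> C"
  obtains xs where "\<forall>k. xs k \<in> interior C" and "xs \<longlonglongrightarrow> y" and "(\<lambda>k. bregman h y (xs k)) \<longlonglongrightarrow> 0"
proof -
  obtain c where c: "c \<in> interior C"
    using assms(2) by blast
  define s where "s k = 1 / (2 * real (Suc k))" for k
  define xs where "xs k = y + s k *\<^sub>R (c - y)" for k
  have shrink: "y - r *\<^sub>R (y - c) \<in> interior C" if "0 < r" "r \<le> 1" for r
    using mem_interior_convex_shrink[OF convex_on_imp_convex[OF convex_h] c \<open>y \<in> C\<close>] that by blast
  have s: "0 < s k" "s k \<le> 1" "2 * s k \<le> 1" for k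
    by (simp_all add: s_def field_simps)
  have "xs k = y - s k *\<^sub>R (y - c)" for k
    by (simp add: xs_def algebra_simps)
  then have interior: "\<forall>k. xs k \<in> interior C"
    using shrink[OF s(1) s(2)] by simp
  have "2 *\<^sub>R xs k - y = y - (2 * s k) *\<^sub>R (y - c)" for k
    by (simp add: xs_def algebra_simps scaleR_2)
  then have "2 *\<^sub>R xs k - y \<in> interior C" for k
    using shrink[OF _ s(3)] s(1)[of k] by simp
  then have "\<forall>k. 2 *\<^sub>R xs k - y \<in> C"
    using interior_subset by blast
  then have reflection: "\<forall>\<^sub>F k in sequentially. 2 *\<^sub>R xs k - y \<in> C"
    by (simp add: always_eventually)
  have "s \<longlonglongrightarrow> 0"
    unfolding s_def using tendsto_divide_zero[OF LIMSEQ_inverse_real_of_nat, of 2]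
    by (simp add: field_simps)
  then have "xs \<longlonglongrightarrow> y + 0 *\<^sub>R (c - y)"
    unfolding xs_def by (intro tendsto_intros)
  then have "xs \<longlonglongrightarrow> y"
    by simp
  then show thesis
    using that interior bregman_tendsto_zero_if_reflection[OF assms(1,3) interior _ reflection] by simp
qed

lemma condA_if_strictly_convex:
  assumes "compact C" and "continuous_on C h" and strict: "strictly_convex_on C h"
  shows "condA h C"
  unfolding condA_def
proof (intro allI impI)
  fix xs y
  assume interior: "\<forall>k. xs k \<in> interior C" and "y \<in> C"
    and bregman: "(\<lambda>k. bregman h y (xs k)) \<longlonglongrightarrow> 0"
  define gap where "gap x = h x + h y - 2 * h (midpoint x y)" for x
  have gap_pos: "0 < gap x" if "x \<in> C" "x \<noteq> y" for x
    using strict that \<open>y \<in> C\<close> unfolding strictly_convex_on_def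
    by (force simp: gap_def midpoint_def scaleR_add_right dest: spec[of _ "1/2"])
  have "midpoint x y \<in> C" if "x \<in> C" for x
    using convex_on_imp_convex[OF convex_h] that \<open>y \<in> C\<close> midpoint_in_closed_segment
    unfolding convex_contains_segment by blast
  then have "continuous_on C (\<lambda>x. h (midpoint x y))"
    by (intro continuous_on_compose2[OF assms(2)]) (auto simp: midpoint_def intro!: continuous_intros)
  then have gap_cont: "continuous_on C gap"
    unfolding gap_def by (intro continuous_intros assms(2))
  show "xs \<longlonglongrightarrow> y"
  proof (rule tendstoI)
    fix e :: real
    assume "0 < e"
    define K where "K = C \<inter> {x. e \<le> dist x y}"
    have "compact K"
      unfolding K_def using \<open>compact C\<close> by (intro compact_Int_closed closed_Collect_le continuous_intros)
    obtain m where "0 < m" and m: "\<forall>x\<in>K. m \<le> gap x"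
    proof (cases "K = {}")
      case False
      then obtain x0 where "x0 \<in> K" "\<forall>x\<in>K. gap x0 \<le> gap x"
        using continuous_attains_inf[OF \<open>compact K\<close>] continuous_on_subset[OF gap_cont] K_def by blast
      then show thesis
        using that gap_pos \<open>0 < e\<close> unfolding K_def by force
    qed (use that[of 1] in simp)
    from order_tendstoD(2)[OF bregman \<open>0 < m\<close>]
    show "\<forall>\<^sub>F k in sequentially. dist (xs k) y < e"
    proof eventually_elim
      case (elim k)
      with midpoint_gap_le_bregman[of "xs k" y] interior \<open>y \<in> C\<close> have "gap (xs k) < m"
        unfolding gap_def by fastforce
      then have "xs k \<notin> K"
        using m by fastforce
      moreover have "xs k \<in> C"
        using interior interior_subset by blast
      ultimately show "dist (xs k) y < e"
        unfolding K_def by simp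
    qed
  qed
qed

lemma strictly_convex_if_condA:
  assumes "continuous_on C h" and "interior C \<noteq> {}" and A: "condA h C"
  shows "strictly_convex_on C h"
  unfolding strictly_convex_on_def
proof (intro conjI convex_on_imp_convex[OF convex_h] ballI impI allI)
  fix u v and t :: real
  assume "u \<in> C" "v \<in> C" "u \<noteq> v" and t: "0 < t \<and> t < 1"
  define w where "w = (1 - t) *\<^sub>R u + t *\<^sub>R v"
  show "h w < (1 - t) * h u + t * h v"
  proof (rule ccontr)
    assume "\<not> ?thesis"
    have "w \<in> C"
      unfolding w_def using convexD[OF convex_on_imp_convex[OF convex_h] \<open>u \<in> C\<close> \<open>v \<in> C\<close>] t by simp
    then obtain xs where interior: "\<forall>k. xs k \<in> interior C" and "xs \<longlonglongrightarrow> w"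
      and bregman_w: "(\<lambda>k. bregman h w (xs k)) \<longlonglongrightarrow> 0"
      using interior_sequence_bregman_tendsto_zero[OF assms(1,2)] by blast
    have upper: "bregman h u (xs k) \<le> bregman h w (xs k) / (1 - t)" for k
    proof -
      have "0 \<le> t * bregman h v (xs k)"
        using bregman_nonneg interior \<open>v \<in> C\<close> t by simp
      then have "(1 - t) * bregman h u (xs k) \<le> bregman h w (xs k)"
        using bregman_convex_combination[of t h u "xs k" v] \<open>\<not> h w < _\<close>
        unfolding w_def by linarith
      then show ?thesis
        using t by (simp add: field_simps)
    qed
    have "(\<lambda>k. bregman h u (xs k)) \<longlonglongrightarrow> 0"
    proof (rule real_tendsto_sandwich[where f = "\<lambda>_. 0" and h = "\<lambda>k. bregman h w (xs k) / (1 - t)"])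
      show "\<forall>\<^sub>F k in sequentially. 0 \<le> bregman h u (xs k)"
        using bregman_nonneg interior \<open>u \<in> C\<close> by simp
      show "\<forall>\<^sub>F k in sequentially. bregman h u (xs k) \<le> bregman h w (xs k) / (1 - t)"
        using upper by simp
      show "(\<lambda>k. bregman h w (xs k) / (1 - t)) \<longlonglongrightarrow> 0"
        using tendsto_divide_zero[OF bregman_w] by simp
    qed simp
    then have "xs \<longlonglongrightarrow> u"
      using A interior \<open>u \<in> C\<close> unfolding condA_def by blast
    with \<open>xs \<longlonglongrightarrow> w\<close> have "u = w"
      using LIMSEQ_unique by blast
    then have "t *\<^sub>R (v - u) = 0"
      unfolding w_def by (auto simp: algebra_simps)
    then show False
      using t \<open>u \<noteq> v\<close> by simp
  qed
qed

lemma condB_if_locally_conic: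
  assumes "continuous_on C h" and conic: "\<forall>y\<in>C. locally_conic_at C y"
  shows "condB h C"
  unfolding condB_def
proof (intro allI impI)
  fix xs y
  assume interior: "\<forall>k. xs k \<in> interior C" and "y \<in> C" and "xs \<longlonglongrightarrow> y"
  have "\<forall>\<^sub>F k in sequentially. xs k \<in> C \<longrightarrow> 2 *\<^sub>R xs k - y \<in> C"
    using eventually_compose_filterlim[OF _ \<open>xs \<longlonglongrightarrow> y\<close>] conic \<open>y \<in> C\<close>
    unfolding locally_conic_at_def by blast
  then have "\<forall>\<^sub>F k in sequentially. 2 *\<^sub>R xs k - y \<in> C"
    by eventually_elim (use interior interior_subset in blast)
  then show "(\<lambda>k. bregman h y (xs k)) \<longlonglongrightarrow> 0"
    using bregman_tendsto_zero_if_reflection[OF assms(1) \<open>y \<in> C\<close> interior \<open>xs \<longlonglongrightarrow> y\<close>] by blast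
qed

lemma norm_grad_bound_if_bregman_le_1:
  assumes "x \<in> interior C" and "y \<in> C" and "0 < \<epsilon>" and "cball z \<epsilon> \<subseteq> C"
    and "0 \<le> l" and "l \<le> 1" and "bregman h y x \<le> 1" and bound: "\<forall>c\<in>C. \<bar>h c\<bar> \<le> B"
  shows "\<epsilon> * norm (grad h x) \<le> 6 * B + 1 + norm (grad h x) * dist x ((1 + l) *\<^sub>R z - l *\<^sub>R y)"
proof -
  define g where "g = grad h x"
  define q where "q = (1 + l) *\<^sub>R z - l *\<^sub>R y"
  \<comment> \<open>the point of cball z \<epsilon> furthest in direction g (or z itself if g = 0)\<close>
  define c where "c = z + (\<epsilon> / norm g) *\<^sub>R g"
  have "0 \<le> B"
    using bound \<open>y \<in> C\<close> by force
  have "c \<in> C"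
    using assms(3,4) by (auto simp: c_def dist_norm subset_iff)
  have "g \<bullet> (c - z) = \<epsilon> * norm g"
    by (simp add: c_def power2_eq_square flip: power2_norm_eq_inner)
  moreover have "h x + g \<bullet> (c - x) \<le> h c"
    using gradient_inequality[OF \<open>x \<in> interior C\<close> \<open>c \<in> C\<close>] by (simp add: g_def)
  moreover have "\<bar>h x\<bar> \<le> B" "\<bar>h c\<bar> \<le> B"
    using bound \<open>c \<in> C\<close> \<open>x \<in> interior C\<close> interior_subset by auto
  ultimately have z: "g \<bullet> (z - x) + \<epsilon> * norm g \<le> 2 * B"
    by (simp add: inner_diff_right)
  have "h y - h x - g \<bullet> (y - x) \<le> 1"
    using \<open>bregman h y x \<le> 1\<close> by (simp add: bregman_def g_def)
  moreover have "\<bar>h y\<bar> \<le> B"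
    using bound \<open>y \<in> C\<close> by blast
  ultimately have y: "- 2 * B - 1 \<le> g \<bullet> (y - x)"
    using \<open>\<bar>h x\<bar> \<le> B\<close> by linarith
  have "(1 + l) * (g \<bullet> (z - x)) \<le> (1 + l) * (2 * B - \<epsilon> * norm g)"
    using z \<open>0 \<le> l\<close> by (intro mult_left_mono) auto
  moreover have "l * (- 2 * B - 1) \<le> l * (g \<bullet> (y - x))"
    using y \<open>0 \<le> l\<close> by (rule mult_left_mono)
  moreover have "l * B \<le> B" and "0 \<le> l * (\<epsilon> * norm g)"
    using \<open>0 \<le> B\<close> \<open>0 \<le> l\<close> \<open>l \<le> 1\<close> \<open>0 < \<epsilon>\<close> by (simp_all add: mult_left_le_one_le)
  moreover have "g \<bullet> (q - x) = (1 + l) * (g \<bullet> (z - x)) - l * (g \<bullet> (y - x))"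
    by (simp add: q_def algebra_simps inner_diff_right)
  ultimately have "g \<bullet> (q - x) \<le> 6 * B + 1 - \<epsilon> * norm g"
    using \<open>l \<le> 1\<close> by (simp add: algebra_simps)
  moreover have "g \<bullet> (x - q) \<le> norm g * dist x q"
    by (simp add: dist_norm norm_cauchy_schwarz)
  ultimately show ?thesis
    by (simp add: g_def q_def inner_diff_right)
qed

lemma reflection_mem_if_bregman_lt_1:
  assumes blowup: "\<forall>b\<in>frontier C. filterlim (\<lambda>x. norm (grad h x)) at_top (at b within interior C)"
    and bound: "\<forall>c\<in>C. \<bar>h c\<bar> \<le> B" and "y \<in> C"
    and \<delta>: "\<forall>x\<in>interior C. dist x y < \<delta> \<longrightarrow> bregman h y x < 1"
    and "z \<in> interior C" and "dist z y < \<delta> / 3"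
  shows "2 *\<^sub>R z - y \<in> C"
proof (rule ccontr)
  assume "2 *\<^sub>R z - y \<notin> C"
  obtain \<epsilon> where "0 < \<epsilon>" and "cball z \<epsilon> \<subseteq> C"
    using \<open>z \<in> interior C\<close> mem_interior_cball by blast
  have "closed_segment z (2 *\<^sub>R z - y) \<inter> frontier C \<noteq> {}"
    using \<open>z \<in> interior C\<close> \<open>2 *\<^sub>R z - y \<notin> C\<close> interior_subset
    by (intro connected_Int_frontier[OF connected_segment]) auto
  then obtain q where "q \<in> closed_segment z (2 *\<^sub>R z - y)" and q: "q \<in> frontier C"
    by blast
  then obtain l where "0 \<le> l" "l \<le> 1" and "q = (1 - l) *\<^sub>R z + l *\<^sub>R (2 *\<^sub>R z - y)"
    by (auto simp: in_segment)
  then have q_eq: "q = (1 + l) *\<^sub>R z - l *\<^sub>R y"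
    by (simp add: algebra_simps scaleR_2)
  have "q - y = (1 + l) *\<^sub>R (z - y)"
    by (simp add: q_eq algebra_simps)
  then have "dist q y = (1 + l) * dist z y"
    using \<open>0 \<le> l\<close> by (simp add: dist_norm)
  also have "\<dots> \<le> 2 * dist z y"
    using \<open>l \<le> 1\<close> by (intro mult_right_mono) auto
  finally have "dist q y < 2 * \<delta> / 3"
    using \<open>dist z y < \<delta> / 3\<close> by linarith
  have "0 < \<delta>"
    using \<open>dist z y < \<delta> / 3\<close> zero_le_dist[of z y] by linarith
  define G where "G = 2 * (6 * B + 1) / \<epsilon> + 1"
  obtain d where "0 < d" and d: "\<forall>x\<in>interior C. x \<noteq> q \<and> dist x q < d \<longrightarrow> G \<le> norm (grad h x)"
    using blowup q unfolding filterlim_at_top eventually_at by blast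
  have "q \<in> closure (interior C)" and "q \<notin> interior C"
    using q convex_closure_interior[OF convex_on_imp_convex[OF convex_h]] \<open>z \<in> interior C\<close>
    by (auto simp: frontier_def)
  then have "q islimpt interior C"
    by (simp add: closure_def)
  moreover have "0 < min d (min (\<epsilon> / 2) (\<delta> / 3))"
    using \<open>0 < d\<close> \<open>0 < \<epsilon>\<close> \<open>0 < \<delta>\<close> by simp
  ultimately obtain x where x: "x \<in> interior C" "x \<noteq> q" "dist x q < min d (min (\<epsilon> / 2) (\<delta> / 3))"
    unfolding islimpt_approachable by blast
  have "dist x y < \<delta>"
    using dist_triangle[of x y q] x(3) \<open>dist q y < 2 * \<delta> / 3\<close> by simp
  then have "\<epsilon> * norm (grad h x) \<le> 6 * B + 1 + norm (grad h x) * dist x q"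
    using norm_grad_bound_if_bregman_le_1[OF x(1) \<open>y \<in> C\<close> \<open>0 < \<epsilon>\<close> \<open>cball z \<epsilon> \<subseteq> C\<close> \<open>0 \<le> l\<close> \<open>l \<le> 1\<close> _ bound] \<delta> x(1)
    by (simp add: q_eq less_imp_le)
  also have "\<dots> \<le> 6 * B + 1 + norm (grad h x) * (\<epsilon> / 2)"
    using x(3) by (intro add_left_mono mult_left_mono) auto
  finally have "\<epsilon> * norm (grad h x) \<le> 2 * (6 * B + 1)"
    by (simp add: field_simps)
  moreover have "\<epsilon> * G \<le> \<epsilon> * norm (grad h x)"
    using d x \<open>0 < \<epsilon>\<close> by (intro mult_left_mono) auto
  moreover have "\<epsilon> * G = 2 * (6 * B + 1) + \<epsilon>"
    using \<open>0 < \<epsilon>\<close> by (simp add: G_def field_simps)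
  ultimately show False
    using \<open>0 < \<epsilon>\<close> by linarith
qed

lemma locally_conic_if_condB:
  assumes "compact C" and "continuous_on C h" and "interior C \<noteq> {}"
    and blowup: "\<forall>b\<in>frontier C. filterlim (\<lambda>x. norm (grad h x)) at_top (at b within interior C)"
    and "condB h C" and "y \<in> C"
  shows "locally_conic_at C y"
proof -
  have "\<forall>\<^sub>F x in at y within interior C. bregman h y x < 1"
    using order_tendstoD(2)[OF bregman_tendsto_zero_at_if_condB[OF assms(5,6)]] by simp
  moreover have "bregman h y y = 0"
    by (simp add: bregman_def)
  ultimately obtain \<delta> where "0 < \<delta>" and \<delta>: "\<forall>x\<in>interior C. dist x y < \<delta> \<longrightarrow> bregman h y x < 1"
    unfolding eventually_at by (metis zero_less_one)
  obtain B where bound: "\<forall>c\<in>C. \<bar>h c\<bar> \<le> B"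
    using compact_imp_bounded[OF compact_continuous_image[OF assms(2,1)]]
    unfolding bounded_iff by auto
  have "\<forall>\<^sub>F z in nhds y. z \<in> interior C \<longrightarrow> 2 *\<^sub>R z - y \<in> C"
    unfolding eventually_nhds_metric
    using reflection_mem_if_bregman_lt_1[OF blowup bound \<open>y \<in> C\<close> \<delta>] \<open>0 < \<delta>\<close>
    by (intro exI[of _ "\<delta> / 3"]) auto
  then show ?thesis
    by (intro locally_conic_at_if_interior[OF convex_on_imp_convex[OF convex_h]]
        compact_imp_closed \<open>compact C\<close> \<open>interior C \<noteq> {}\<close>)
qed

lemma condB_iff_locally_conic:
  assumes "compact C" and "continuous_on C h" and "interior C \<noteq> {}"
    and "\<forall>b\<in>frontier C. filterlim (\<lambda>x. norm (grad h x)) at_top (at b within interior C)"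
  shows "condB h C \<longleftrightarrow> (\<forall>y\<in>C. locally_conic_at C y)"
  using condB_if_locally_conic locally_conic_if_condB assms by blast

end

theorem theorem1:
  fixes C :: "'a::euclidean_space set" and h :: "'a \<Rightarrow> real"
  assumes "convex C" and "compact C" and "interior C \<noteq> {}"
    and "legendre h C" and "continuous_on C h"
  shows "(condA h C \<longleftrightarrow> strictly_convex_on C h) \<and> (condB h C \<longleftrightarrow> polytope C)"
proof -
  have "convex_on C h" and differentiable: "\<forall>x\<in>interior C. h differentiable (at x)"
    and blowup: "\<forall>b\<in>frontier C. filterlim (\<lambda>x. norm (grad h x)) at_top (at b within interior C)"
    using \<open>legendre h C\<close> unfolding legendre_def essentially_smooth_def by auto
  note setting = \<open>convex_on C h\<close> differentiable[rule_format]
  have "condA h C \<longleftrightarrow> strictly_convex_on C h"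
    using condA_if_strictly_convex[OF setting] strictly_convex_if_condA[OF setting] assms by blast
  moreover have "condB h C \<longleftrightarrow> polytope C"
    using condB_iff_locally_conic[OF setting \<open>compact C\<close> \<open>continuous_on C h\<close> \<open>interior C \<noteq> {}\<close> blowup]
      polytope_iff_locally_conic[OF \<open>compact C\<close> \<open>convex C\<close>] by blast
  ultimately show ?thesis ..
qed

end
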